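(* Let $F=F(N,\mathcal D)$ be a non-fragile connected GSC having at least one cut point. Then $F$ has a cut point with a unique representation, i.e. a cut point $x$ such that there is exactly one $\mathbf i\in\mathcal D^\infty$ with $\pi(\mathbf i)=x$.
   Context: GSC: $N\ge2$, $\mathcal D\subset\{0,\dots,N-1\}^2$ with $1<|\mathcal D|<N^2$, $\varphi_i(x)=\frac1N(x+i)$, $F$ the attractor $F=\bigcup_{i\in\mathcal D}\varphi_i(F)$. $\mathcal D^\infty$ is the set of infinite sequences $i_1i_2\cdots$ over $\mathcal D$; the coding map $\pi:\mathcal D^\infty\to F$ sends $\mathbf i$ to the unique point of $\bigcap_{k\ge1}\varphi_{i_1}\circ\cdots\circ\varphi_{i_k}(F)$; $\mathbf i$ is called a representation of $\pi(\mathbf i)$. $F$ is fragile if there is a partition $\mathcal D=\mathcal D_1\cup\mathcal D_2$ into disjoint nonempty sets with $\big(\bigcup_{i\in\mathcal D_1}\varphi_i(F)\big)\cap\big(\bigcup_{i\in\mathcal D_2}\varphi_i(F)\big)$ a singleton; non-fragile otherwise. *)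

theory Defs
  imports "HOL-Analysis.Analysis"
begin

type_synonym pt = "real \<times> real"
type_synonym digit = "nat \<times> nat"

definition phi :: "nat \<Rightarrow> digit \<Rightarrow> pt \<Rightarrow> pt" where
  "phi N i x = ((fst x + real (fst i)) / real N, (snd x + real (snd i)) / real N)"

definition GSC_data :: "nat \<Rightarrow> digit set \<Rightarrow> bool" where
  "GSC_data N D \<longleftrightarrow> N \<ge> 2 \<and> D \<subseteq> {0..<N} \<times> {0..<N} \<and> 1 < card D \<and> card D < N^2"

definition is_attractor :: "nat \<Rightarrow> digit set \<Rightarrow> pt set \<Rightarrow> bool" where
  "is_attractor N D F \<longleftrightarrow> compact F \<and> F \<noteq> {} \<and> F = (\<Union>i\<in>D. phi N i ` F)"

definition Dinf :: "digit set \<Rightarrow> (nat \<Rightarrow> digit) set" where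
  "Dinf D = {s. \<forall>k. s k \<in> D}"

text \<open>comp N s k = phi_{s 0} o ... o phi_{s (k-1)}\<close>
fun comp :: "nat \<Rightarrow> (nat \<Rightarrow> digit) \<Rightarrow> nat \<Rightarrow> pt \<Rightarrow> pt" where
  "comp N s 0 = id"
| "comp N s (Suc k) = comp N s k \<circ> phi N (s k)"

definition coding :: "nat \<Rightarrow> pt set \<Rightarrow> (nat \<Rightarrow> digit) \<Rightarrow> pt" where
  "coding N F s = (THE x. x \<in> (\<Inter>k\<in>{1..}. comp N s k ` F))"

definition fragile :: "nat \<Rightarrow> digit set \<Rightarrow> pt set \<Rightarrow> bool" where
  "fragile N D F \<longleftrightarrow> (\<exists>D1 D2. D1 \<union> D2 = D \<and> D1 \<inter> D2 = {} \<and> D1 \<noteq> {} \<and> D2 \<noteq> {} \<and>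
     (\<exists>x. (\<Union>i\<in>D1. phi N i ` F) \<inter> (\<Union>i\<in>D2. phi N i ` F) = {x}))"

definition cut_point :: "pt set \<Rightarrow> pt \<Rightarrow> bool" where
  "cut_point F x \<longleftrightarrow> x \<in> F \<and> \<not> connected (F - {x})"

end

theory Submission
  imports Defs
begin

text \<open>Cut points propagate to preimages: if c is a cut point of F and no preimage of c under a
  map whose cell contains c were a cut point, every cell minus c would be connected, and a
  separation of F - {c} would split the cells into two groups meeting exactly in c, making F
  fragile; if c lies in a single cell, that cell's preimage works even without non-fragility.
  Following single-cell preimages from a cut point either goes on forever, and then the digits
  read off are its only representation, or reaches a cut point lying in two cells. The preimage of
  a point in two cells lies on the boundary of the unit square, and preimages of boundary points
  stay on the boundary; descending once more from such a boundary cut point we either find a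
  uniquely represented cut point or a boundary point in two cells, whose preimage is a corner of
  the square. A corner lies only in the cell of the map fixing it, so it is uniquely represented.\<close>

definition phi_inv :: "nat \<Rightarrow> digit \<Rightarrow> pt \<Rightarrow> pt" where
  "phi_inv N i c = (real N * fst c - real (fst i), real N * snd c - real (snd i))"

lemma phi_inv_phi [simp]: "N > 0 \<Longrightarrow> phi_inv N i (phi N i x) = x"
  by (simp add: phi_inv_def phi_def prod_eq_iff)

lemma phi_phi_inv [simp]: "N > 0 \<Longrightarrow> phi N i (phi_inv N i x) = x"
  by (simp add: phi_inv_def phi_def prod_eq_iff)

lemma inj_phi: "N > 0 \<Longrightarrow> inj (phi N i)"
  by (metis inj_on_inverseI phi_inv_phi)

lemma continuous_on_phi: "continuous_on S (phi N i)"
  unfolding phi_def divide_inverse by (intro continuous_intros)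

lemma continuous_on_comp: "continuous_on S (comp N s k)"
proof (induction k arbitrary: S)
  case (Suc k)
  show ?case
    unfolding comp.simps by (rule continuous_on_compose[OF continuous_on_phi Suc.IH])
qed simp

lemma phi_diff: "phi N i x - phi N i y = (x - y) /\<^sub>R real N"
  by (simp add: phi_def prod_eq_iff divide_inverse algebra_simps)

lemma dist_phi: "dist (phi N i x) (phi N i y) = dist x y / real N"
  by (simp add: dist_norm phi_diff divide_inverse_commute)

lemma dist_comp: "dist (comp N s k x) (comp N s k y) = dist x y / real N ^ k"
  by (induction k arbitrary: x y) (simp_all add: dist_phi)

lemma comp_Suc_shift: "comp N s (Suc k) = phi N (s 0) \<circ> comp N (\<lambda>n. s (Suc n)) k"
proof (induction k)
  case (Suc k)
  then show ?case by (simp only: comp.simps o_assoc)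
qed simp

lemma edge_coordinate:
  fixes a t :: real
  assumes "0 \<le> a" "a \<le> 1" "m < N" "a + real m = real N * t" "t = 0 \<or> t = 1"
  shows "a = t \<and> m = (if t = 0 then 0 else N - 1)"
  using assms(5)
proof
  assume "t = 0" then show ?thesis using assms(1,4) by simp
next
  assume t: "t = 1"
  have "real m \<le> real N - 1" using assms(3) by linarith
  then show ?thesis using assms(2-4) t by auto
qed

lemma distinct_digit_edge:
  fixes a b :: real
  assumes "0 \<le> a" "a \<le> 1" "0 \<le> b" "b \<le> 1" "a + real m = b + real n" "m \<noteq> n"
  shows "a = 0 \<or> a = 1"
proof (cases "m < n")
  case True
  then have "real m + 1 \<le> real n" by simp
  then show ?thesis using assms by linarith
next
  case False
  then have "real n + 1 \<le> real m" using assms(6) by simp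
  then show ?thesis using assms by linarith
qed

locale gsc_attractor =
  fixes N :: nat and D :: "digit set" and F :: "pt set"
  assumes gsc_data: "GSC_data N D" and attractor: "is_attractor N D F"
begin

lemma N_ge_2: "N \<ge> 2" and N_pos: "N > 0"
  using gsc_data by (auto simp: GSC_data_def)

lemma finite_D: "finite D"
  using gsc_data unfolding GSC_data_def by (meson finite_SigmaI finite_atLeastLessThan finite_subset)

lemma digit_less: "i \<in> D \<Longrightarrow> fst i < N" "i \<in> D \<Longrightarrow> snd i < N"
  using gsc_data unfolding GSC_data_def by auto

lemma F_eq: "F = (\<Union>i\<in>D. phi N i ` F)" and compact_F: "compact F" and F_nonempty: "F \<noteq> {}"
  using attractor by (auto simp: is_attractor_def)

lemma cell_subset: "i \<in> D \<Longrightarrow> phi N i ` F \<subseteq> F"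
  using F_eq by blast

lemma obtain_cell:
  assumes "p \<in> F" obtains i q where "i \<in> D" "q \<in> F" "p = phi N i q"
  using assms F_eq by blast

lemma compact_cell: "compact (phi N i ` F)"
  by (rule compact_continuous_image[OF continuous_on_phi compact_F])

lemma phi_inv_in_F: "c \<in> phi N i ` F \<Longrightarrow> phi_inv N i c \<in> F"
  using N_pos by auto

lemma self_similar_function_bounds:
  assumes g: "\<And>i x. g (phi N i x) = (g x + real (h i)) / real N"
    and h: "\<And>i. i \<in> D \<Longrightarrow> h i < N"
    and cont: "continuous_on F g"
    and p: "p \<in> F"
  shows "0 \<le> g p \<and> g p \<le> 1"
proof -
  have N1: "real N > 1" using N_ge_2 by simp
  have compact_gF: "compact (g ` F)"
    by (rule compact_continuous_image[OF cont compact_F])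
  have image_eq: "real N * g (phi N i q) = g q + real (h i)" for i q
    using g[of i q] N_pos by (simp add: field_simps)
  obtain M where M: "M \<in> g ` F" "\<And>t. t \<in> g ` F \<Longrightarrow> t \<le> M"
    using compact_attains_sup[OF compact_gF] F_nonempty by blast
  obtain m where m: "m \<in> g ` F" "\<And>t. t \<in> g ` F \<Longrightarrow> m \<le> t"
    using compact_attains_inf[OF compact_gF] F_nonempty by blast
  have "M \<le> 1"
  proof -
    obtain i q where iq: "i \<in> D" "q \<in> F" "M = g (phi N i q)"
      using M(1) obtain_cell by (metis imageE)
    have "g q \<le> M" using M(2) iq(2) by blast
    moreover have "real (h i) \<le> real N - 1" using h[OF iq(1)] by linarith
    moreover have "real N * M = g q + real (h i)" using image_eq iq(3) by simp
    ultimately have "(M - 1) * (real N - 1) \<le> 0" by (simp add: algebra_simps)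
    then show ?thesis using N1 by (simp add: mult_le_0_iff)
  qed
  moreover have "0 \<le> m"
  proof -
    obtain i q where iq: "i \<in> D" "q \<in> F" "m = g (phi N i q)"
      using m(1) obtain_cell by (metis imageE)
    have "m \<le> g q" using m(2) iq(2) by blast
    moreover have "real N * m = g q + real (h i)" using image_eq iq(3) by simp
    ultimately have "m * (real N - 1) \<ge> 0" by (simp add: algebra_simps)
    then show ?thesis using N1 by (simp add: zero_le_mult_iff)
  qed
  moreover have "m \<le> g p" "g p \<le> M" using m(2) M(2) p by blast+
  ultimately show ?thesis by linarith
qed

lemma F_in_unit_square:
  assumes "p \<in> F" shows "0 \<le> fst p" "fst p \<le> 1" "0 \<le> snd p" "snd p \<le> 1"
proof -
  have "continuous_on F fst" "continuous_on F snd" by (intro continuous_intros)+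
  then show "0 \<le> fst p" "fst p \<le> 1" "0 \<le> snd p" "snd p \<le> 1"
    using self_similar_function_bounds[of fst fst, OF _ _ _ assms]
      self_similar_function_bounds[of snd snd, OF _ _ _ assms]
    by (simp_all add: phi_def digit_less)
qed

lemma cylinder_antimono:
  assumes "s \<in> Dinf D" "k \<le> m" shows "comp N s m ` F \<subseteq> comp N s k ` F"
  using assms(2)
proof (induction m rule: dec_induct)
  case (step m)
  have "comp N s (Suc m) ` F = comp N s m ` phi N (s m) ` F" by (simp add: image_comp)
  also have "\<dots> \<subseteq> comp N s m ` F"
    using assms(1) by (intro image_mono cell_subset) (simp add: Dinf_def)
  finally show ?case using step.IH by blast
qed simp

lemma cylinders_Inter:
  assumes s: "s \<in> Dinf D" shows "(\<Inter>k\<in>{1..}. comp N s k ` F) = {coding N F s}"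
proof -
  define S where "S n = comp N s (Suc n) ` F" for n
  have Inter_eq: "(\<Inter>k\<in>{1..}. comp N s k ` F) = \<Inter>(range S)"
  proof -
    have "{1::nat..} = range Suc" using atLeast_Suc_greaterThan greaterThan_0 by simp
    then show ?thesis by (simp add: S_def image_image)
  qed
  obtain B where B: "\<And>p q. p \<in> F \<Longrightarrow> q \<in> F \<Longrightarrow> dist p q \<le> B"
    using compact_imp_bounded[OF compact_F] unfolding bounded_two_points by blast
  have "\<exists>a. \<Inter>(range S) = {a}"
  proof (rule decreasing_closed_nest_sing)
    show "closed (S n)" for n
      unfolding S_def by (intro compact_imp_closed compact_continuous_image continuous_on_comp compact_F)
    show "S n \<noteq> {}" for n
      using F_nonempty by (simp add: S_def)
    show "m \<le> n \<Longrightarrow> S n \<subseteq> S m" for m n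
      unfolding S_def by (rule cylinder_antimono[OF s]) simp
  next
    fix \<epsilon> :: real assume "\<epsilon> > 0"
    have "1 < real N" using N_ge_2 by simp
    then have "(\<lambda>n. B / real N ^ Suc n) \<longlonglongrightarrow> 0"
      by (intro LIMSEQ_Suc LIMSEQ_divide_realpow_zero)
    then have "\<forall>\<^sub>F n in sequentially. B / real N ^ Suc n < \<epsilon>"
      using \<open>\<epsilon> > 0\<close> by (rule order_tendstoD(2))
    then obtain n where n: "B / real N ^ Suc n < \<epsilon>"
      unfolding eventually_sequentially by blast
    have "dist x y < \<epsilon>" if xy: "x \<in> S n" "y \<in> S n" for x y
    proof -
      obtain p q where "p \<in> F" "q \<in> F" "x = comp N s (Suc n) p" "y = comp N s (Suc n) q"
        using xy unfolding S_def by blast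
      then have "dist x y = dist p q / real N ^ Suc n" by (simp only: dist_comp)
      also have "\<dots> \<le> B / real N ^ Suc n"
        using B \<open>p \<in> F\<close> \<open>q \<in> F\<close> by (intro divide_right_mono) auto
      finally show ?thesis using n by linarith
    qed
    then show "\<exists>n. \<forall>x\<in>S n. \<forall>y\<in>S n. dist x y < \<epsilon>" by blast
  qed
  then obtain a where a: "\<Inter>(range S) = {a}" by blast
  then have "coding N F s = a"
    unfolding coding_def Inter_eq by simp
  then show ?thesis using a Inter_eq by simp
qed

lemma coding_in_cylinder:
  assumes s: "s \<in> Dinf D" shows "coding N F s \<in> comp N s k ` F"
proof -
  have "coding N F s \<in> (\<Inter>k\<in>{1..}. comp N s k ` F)" using cylinders_Inter[OF s] by simp
  then have "coding N F s \<in> comp N s (Suc k) ` F" by (rule INT_D) simp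
  then show ?thesis using cylinder_antimono[OF s, of k "Suc k"] by auto
qed

lemma coding_eqI:
  assumes s: "s \<in> Dinf D" and x: "\<And>k. x \<in> comp N s k ` F" shows "coding N F s = x"
proof -
  have "x \<in> (\<Inter>k\<in>{1..}. comp N s k ` F)" using x by blast
  then show ?thesis unfolding cylinders_Inter[OF s] by simp
qed

definition uniquely_addressed :: "pt \<Rightarrow> bool" where
  "uniquely_addressed x \<longleftrightarrow>
    (\<exists>s xs. (\<forall>k. s k \<in> D) \<and> xs 0 = x \<and> (\<forall>k. xs k \<in> F) \<and>
      (\<forall>k. xs k = phi N (s k) (xs (Suc k))) \<and>
      (\<forall>k. \<forall>i\<in>D. xs k \<in> phi N i ` F \<longrightarrow> i = s k))"

lemma in_cylinders_shift:
  assumes "\<And>m. y \<in> comp N s m ` F"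
  shows "y \<in> phi N (s 0) ` F" "phi_inv N (s 0) y \<in> comp N (\<lambda>n. s (Suc n)) m ` F"
proof -
  show "y \<in> phi N (s 0) ` F" using assms[of 1] by simp
  obtain p where "p \<in> F" "y = phi N (s 0) (comp N (\<lambda>n. s (Suc n)) m p)"
    using assms[of "Suc m"] unfolding comp_Suc_shift by auto
  then show "phi_inv N (s 0) y \<in> comp N (\<lambda>n. s (Suc n)) m ` F" using N_pos by simp
qed

lemma address_chain_digits:
  assumes chain: "\<And>k. xs k = phi N (s k) (xs (Suc k))"
    and unique: "\<And>k i. i \<in> D \<Longrightarrow> xs k \<in> phi N i ` F \<Longrightarrow> i = s k"
  shows "t \<in> Dinf D \<Longrightarrow> (\<And>m. xs j \<in> comp N t m ` F) \<Longrightarrow> t k = s (j + k)"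
proof (induction k arbitrary: t j)
  case 0
  then show ?case using unique[OF _ in_cylinders_shift(1)[OF 0(2)]] by (simp add: Dinf_def)
next
  case (Suc k)
  have "t 0 = s j"
    using unique[OF _ in_cylinders_shift(1)[OF Suc.prems(2)]] Suc.prems(1) by (simp add: Dinf_def)
  then have "phi_inv N (t 0) (xs j) = xs (Suc j)" using chain[of j] N_pos by simp
  then have "xs (Suc j) \<in> comp N (\<lambda>n. t (Suc n)) m ` F" for m
    using in_cylinders_shift(2)[OF Suc.prems(2)] by simp
  moreover have "(\<lambda>n. t (Suc n)) \<in> Dinf D" using Suc.prems(1) by (simp add: Dinf_def)
  ultimately show ?case using Suc.IH[of "\<lambda>n. t (Suc n)" "Suc j"] by simp
qed

lemma uniquely_addressed_unique_coding:
  assumes "uniquely_addressed x" shows "\<exists>!s. s \<in> Dinf D \<and> coding N F s = x"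
proof -
  obtain s xs where s: "\<forall>k. s k \<in> D" and x: "xs 0 = x" and in_F: "\<And>k. xs k \<in> F"
    and chain: "\<And>k. xs k = phi N (s k) (xs (Suc k))"
    and unique: "\<And>k i. i \<in> D \<Longrightarrow> xs k \<in> phi N i ` F \<Longrightarrow> i = s k"
    using assms unfolding uniquely_addressed_def by blast
  have s_D: "s \<in> Dinf D" using s by (simp add: Dinf_def)
  have "comp N s k (xs k) = x" for k
    by (induction k) (auto simp: x chain[symmetric])
  then have "x \<in> comp N s k ` F" for k using in_F by (metis image_eqI)
  then have "coding N F s = x" by (rule coding_eqI[OF s_D])
  moreover have "t = s" if t: "t \<in> Dinf D" "coding N F t = x" for t
  proof
    fix n
    have "xs 0 \<in> comp N t m ` F" for m using coding_in_cylinder[OF t(1)] t(2) x by simp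
    from address_chain_digits[where xs = xs and s = s and j = 0, OF chain unique t(1) this]
    show "t n = s n" by simp
  qed
  ultimately show ?thesis using s_D by blast
qed

lemma connected_cell_minus:
  assumes "c \<in> phi N i ` F" "connected (F - {phi_inv N i c})"
  shows "connected (phi N i ` F - {c})"
proof -
  have "phi N i ` (F - {phi_inv N i c}) = phi N i ` F - {c}"
    using image_set_diff[OF inj_phi[OF N_pos]] N_pos by simp
  then show ?thesis
    using connected_continuous_image[OF continuous_on_phi[of _ N i] assms(2)] by simp
qed

lemma connected_cell_minus_outside:
  "c \<notin> phi N i ` F \<Longrightarrow> connected F \<Longrightarrow> connected (phi N i ` F - {c})"
  using connected_continuous_image[OF continuous_on_phi] by simp

lemma cut_point_cell_partition:
  assumes F: "connected F" and cut: "cut_point F c"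
    and cells: "\<And>i. i \<in> D \<Longrightarrow> connected (phi N i ` F - {c})"
  obtains D1 D2 where "D1 \<union> D2 = D" "D1 \<inter> D2 = {}" "D1 \<noteq> {}" "D2 \<noteq> {}"
    "(\<Union>i\<in>D1. phi N i ` F) \<inter> (\<Union>i\<in>D2. phi N i ` F) = {c}"
proof -
  obtain A B where AB: "open A" "open B" "F - {c} \<subseteq> A \<union> B" "A \<inter> B \<inter> (F - {c}) = {}"
    "A \<inter> (F - {c}) \<noteq> {}" "B \<inter> (F - {c}) \<noteq> {}"
    using cut unfolding cut_point_def connected_def by blast
  have side: "phi N i ` F - {c} \<subseteq> A \<or> phi N i ` F - {c} \<subseteq> B" if i: "i \<in> D" for i
  proof -
    have sub: "phi N i ` F - {c} \<subseteq> F - {c}" using cell_subset[OF i] by blast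
    have "A \<inter> (phi N i ` F - {c}) = {} \<or> B \<inter> (phi N i ` F - {c}) = {}"
      by (rule connectedD[OF cells[OF i] AB(1,2)]) (use sub AB(3,4) in blast)+
    then show ?thesis using sub AB(3) by blast
  qed
  define D1 where "D1 = {i\<in>D. phi N i ` F - {c} \<subseteq> A}"
  define D2 where "D2 = D - D1"
  let ?U1 = "\<Union>i\<in>D1. phi N i ` F" and ?U2 = "\<Union>i\<in>D2. phi N i ` F"
  have U1_A: "?U1 - {c} \<subseteq> A" unfolding D1_def by blast
  have U2_B: "?U2 - {c} \<subseteq> B" using side unfolding D1_def D2_def by blast
  have partition: "D1 \<union> D2 = D" "D1 \<inter> D2 = {}" unfolding D2_def D1_def by blast+
  have "F = ?U1 \<union> ?U2" unfolding UN_Un[symmetric] partition(1) by (rule F_eq)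
  then have U_F: "?U1 \<subseteq> F" "?U2 \<subseteq> F" "F \<subseteq> ?U1 \<union> ?U2" by blast+
  have "?U1 \<inter> ?U2 \<subseteq> {c}" using U1_A U2_B U_F(1) AB(4) by blast
  moreover have "D1 \<noteq> {}"
  proof
    assume "D1 = {}"
    then have "F - {c} \<subseteq> B" using U_F(3) U2_B by auto
    then show False using AB(4,5) by blast
  qed
  moreover have "D2 \<noteq> {}"
  proof
    assume "D2 = {}"
    then have "F - {c} \<subseteq> A" using U_F(3) U1_A by auto
    then show False using AB(4,6) by blast
  qed
  moreover have "?U1 \<inter> ?U2 \<noteq> {}"
  proof
    assume "?U1 \<inter> ?U2 = {}"
    then have disj: "?U1 \<inter> ?U2 \<inter> F = {}" by blast
    have fin: "finite D1" "finite D2" using finite_D unfolding D1_def D2_def by auto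
    have "closed ?U1" "closed ?U2"
      using fin by (auto intro!: compact_imp_closed compact_cell)
    from connected_closedD[OF F disj U_F(3) this] show False
      using \<open>D1 \<noteq> {}\<close> \<open>D2 \<noteq> {}\<close> U_F(1,2) F_nonempty by blast
  qed
  ultimately show ?thesis using that[OF partition] by blast
qed

lemma cut_point_phi_inv_single_cell:
  assumes F: "connected F" and cut: "cut_point F c" and i: "i \<in> D" "c \<in> phi N i ` F"
    and single: "\<And>j. j \<in> D \<Longrightarrow> c \<in> phi N j ` F \<Longrightarrow> j = i"
  shows "cut_point F (phi_inv N i c)"
proof -
  have "\<not> connected (F - {phi_inv N i c})"
  proof
    assume con: "connected (F - {phi_inv N i c})"
    have "connected (phi N j ` F - {c})" if j: "j \<in> D" for j
      using connected_cell_minus[OF i(2) con] connected_cell_minus_outside[OF _ F] single[OF j]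
      by blast
    then obtain D1 D2 where "D1 \<union> D2 = D" "D1 \<inter> D2 = {}" "D1 \<noteq> {}" "D2 \<noteq> {}"
      "(\<Union>i\<in>D1. phi N i ` F) \<inter> (\<Union>i\<in>D2. phi N i ` F) = {c}"
      by (rule cut_point_cell_partition[OF F cut])
    then show False using single by blast
  qed
  then show ?thesis using phi_inv_in_F[OF i(2)] by (simp add: cut_point_def)
qed

lemma cut_point_phi_inv:
  assumes F: "connected F" and nf: "\<not> fragile N D F" and cut: "cut_point F c"
  obtains i where "i \<in> D" "c \<in> phi N i ` F" "cut_point F (phi_inv N i c)"
proof -
  have "\<exists>i\<in>D. c \<in> phi N i ` F \<and> cut_point F (phi_inv N i c)"
  proof (rule ccontr)
    assume none: "\<not> ?thesis"
    have "connected (phi N j ` F - {c})" if j: "j \<in> D" for j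
    proof (cases "c \<in> phi N j ` F")
      case True
      then have "connected (F - {phi_inv N j c})"
        using none j phi_inv_in_F[OF True] by (auto simp: cut_point_def)
      then show ?thesis using connected_cell_minus[OF True] by blast
    qed (rule connected_cell_minus_outside[OF _ F])
    then obtain D1 D2 where "D1 \<union> D2 = D" "D1 \<inter> D2 = {}" "D1 \<noteq> {}" "D2 \<noteq> {}"
      "(\<Union>i\<in>D1. phi N i ` F) \<inter> (\<Union>i\<in>D2. phi N i ` F) = {c}"
      by (rule cut_point_cell_partition[OF F cut])
    then have "fragile N D F" unfolding fragile_def by blast
    with nf show False by simp
  qed
  then show thesis using that by blast
qed

definition on_square_boundary :: "pt \<Rightarrow> bool" where
  "on_square_boundary p \<longleftrightarrow> fst p = 0 \<or> fst p = 1 \<or> snd p = 0 \<or> snd p = 1"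

definition square_corner :: "pt \<Rightarrow> bool" where
  "square_corner p \<longleftrightarrow> (fst p = 0 \<or> fst p = 1) \<and> (snd p = 0 \<or> snd p = 1)"

lemma phi_coordinates:
  assumes "c = phi N i q"
  shows "fst q + real (fst i) = real N * fst c" "snd q + real (snd i) = real N * snd c"
  using assms N_pos by (simp_all add: phi_def field_simps)

lemma phi_inv_two_cells_boundary:
  assumes ij: "i \<in> D" "j \<in> D" "i \<noteq> j" and c: "c \<in> phi N i ` F" "c \<in> phi N j ` F"
  shows "on_square_boundary (phi_inv N i c)"
proof -
  obtain q r where qr: "q \<in> F" "r \<in> F" "c = phi N i q" "c = phi N j r" using c by blast
  note bq = F_in_unit_square[OF qr(1)] and br = F_in_unit_square[OF qr(2)]
  have e1: "fst q + real (fst i) = fst r + real (fst j)"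
    and e2: "snd q + real (snd i) = snd r + real (snd j)"
    using phi_coordinates[OF qr(3)] phi_coordinates[OF qr(4)] by simp_all
  have "fst i \<noteq> fst j \<or> snd i \<noteq> snd j" using ij(3) by (simp add: prod_eq_iff)
  then have "on_square_boundary q"
  proof
    assume "fst i \<noteq> fst j"
    then show ?thesis
      using distinct_digit_edge[OF bq(1,2) br(1,2) e1] by (auto simp: on_square_boundary_def)
  next
    assume "snd i \<noteq> snd j"
    then show ?thesis
      using distinct_digit_edge[OF bq(3,4) br(3,4) e2] by (auto simp: on_square_boundary_def)
  qed
  then show ?thesis using qr(3) N_pos by simp
qed

lemma phi_inv_boundary:
  assumes b: "on_square_boundary c" and i: "i \<in> D" and c: "c \<in> phi N i ` F"
  shows "on_square_boundary (phi_inv N i c)"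
proof -
  obtain q where q: "q \<in> F" "c = phi N i q" using c by blast
  note coords = phi_coordinates[OF q(2)] and bounds = F_in_unit_square[OF q(1)]
  have fst_edge: "fst q = fst c" if "fst c = 0 \<or> fst c = 1"
    using edge_coordinate[OF bounds(1,2) digit_less(1)[OF i] coords(1) that] by simp
  have snd_edge: "snd q = snd c" if "snd c = 0 \<or> snd c = 1"
    using edge_coordinate[OF bounds(3,4) digit_less(2)[OF i] coords(2) that] by simp
  have "on_square_boundary q"
    using b fst_edge snd_edge unfolding on_square_boundary_def by metis
  then show ?thesis using q(2) N_pos by simp
qed

lemma phi_inv_boundary_two_cells_corner:
  assumes b: "on_square_boundary c" and ij: "i \<in> D" "j \<in> D" "i \<noteq> j"
    and c: "c \<in> phi N i ` F" "c \<in> phi N j ` F"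
  shows "square_corner (phi_inv N i c)"
proof -
  obtain q r where qr: "q \<in> F" "r \<in> F" "c = phi N i q" "c = phi N j r" using c by blast
  note cq = phi_coordinates[OF qr(3)] and cr = phi_coordinates[OF qr(4)]
  note bq = F_in_unit_square[OF qr(1)] and br = F_in_unit_square[OF qr(2)]
  have e1: "fst q + real (fst i) = fst r + real (fst j)"
    and e2: "snd q + real (snd i) = snd r + real (snd j)"
    using cq cr by simp_all
  have fst_edge: "fst q = fst c \<and> fst i = fst j" if "fst c = 0 \<or> fst c = 1"
    using edge_coordinate[OF bq(1,2) digit_less(1)[OF ij(1)] cq(1) that]
      edge_coordinate[OF br(1,2) digit_less(1)[OF ij(2)] cr(1) that] by simp
  have snd_edge: "snd q = snd c \<and> snd i = snd j" if "snd c = 0 \<or> snd c = 1"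
    using edge_coordinate[OF bq(3,4) digit_less(2)[OF ij(1)] cq(2) that]
      edge_coordinate[OF br(3,4) digit_less(2)[OF ij(2)] cr(2) that] by simp
  from b consider "fst c = 0 \<or> fst c = 1" | "snd c = 0 \<or> snd c = 1"
    unfolding on_square_boundary_def by blast
  then have "square_corner q"
  proof cases
    case 1
    with fst_edge have "fst q = fst c" "snd i \<noteq> snd j" using ij(3) by (auto simp: prod_eq_iff)
    then show ?thesis
      using 1 distinct_digit_edge[OF bq(3,4) br(3,4) e2] by (auto simp: square_corner_def)
  next
    case 2
    with snd_edge have "snd q = snd c" "fst i \<noteq> fst j" using ij(3) by (auto simp: prod_eq_iff)
    then show ?thesis
      using 2 distinct_digit_edge[OF bq(1,2) br(1,2) e1] by (auto simp: square_corner_def)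
  qed
  then show ?thesis using qr(3) N_pos by simp
qed

lemma corner_cell:
  assumes corner: "square_corner c" and j: "j \<in> D" and q: "q \<in> F" "c = phi N j q"
  shows "q = c \<and> j = (if fst c = 0 then 0 else N - 1, if snd c = 0 then 0 else N - 1)"
proof -
  note coords = phi_coordinates[OF q(2)] and bounds = F_in_unit_square[OF q(1)]
  have "fst c = 0 \<or> fst c = 1" "snd c = 0 \<or> snd c = 1"
    using corner by (auto simp: square_corner_def)
  from edge_coordinate[OF bounds(1,2) digit_less(1)[OF j] coords(1) this(1)]
    edge_coordinate[OF bounds(3,4) digit_less(2)[OF j] coords(2) this(2)]
  show ?thesis by (simp add: prod_eq_iff)
qed

lemma corner_uniquely_addressed:
  assumes corner: "square_corner c" and c: "c \<in> F" shows "uniquely_addressed c"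
proof -
  obtain i q where iq: "i \<in> D" "q \<in> F" "c = phi N i q" using obtain_cell[OF c] .
  have fixed: "phi N i c = c" using corner_cell[OF corner iq] iq(3) by simp
  have single: "j = i" if j: "j \<in> D" "c \<in> phi N j ` F" for j
  proof -
    obtain r where "r \<in> F" "c = phi N j r" using j(2) by blast
    then show ?thesis using corner_cell[OF corner j(1)] corner_cell[OF corner iq] by simp
  qed
  show ?thesis unfolding uniquely_addressed_def
    by (rule exI[of _ "\<lambda>_. i"], rule exI[of _ "\<lambda>_. c"]) (simp add: iq(1) c fixed single)
qed

lemma cut_point_descent:
  assumes F: "connected F" and cut: "cut_point F x" and "P x"
    and P_phi_inv: "\<And>c i. P c \<Longrightarrow> i \<in> D \<Longrightarrow> c \<in> phi N i ` F \<Longrightarrow> P (phi_inv N i c)"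
  obtains (unique) "uniquely_addressed x"
  | (two_cells) y i j where "cut_point F y" "P y" "i \<in> D" "j \<in> D" "i \<noteq> j"
      "y \<in> phi N i ` F" "y \<in> phi N j ` F"
proof (cases "\<exists>y i j. cut_point F y \<and> P y \<and> i \<in> D \<and> j \<in> D \<and> i \<noteq> j \<and>
    y \<in> phi N i ` F \<and> y \<in> phi N j ` F")
  case True
  then show ?thesis using two_cells by blast
next
  case False
  have "\<forall>c\<in>F. \<exists>i. i \<in> D \<and> c \<in> phi N i ` F" using obtain_cell by blast
  then obtain cell where cell: "\<forall>c\<in>F. cell c \<in> D \<and> c \<in> phi N (cell c) ` F" by metis
  define xs where "xs k = ((\<lambda>c. phi_inv N (cell c) c) ^^ k) x" for k
  define s where "s k = cell (xs k)" for k
  have xs_Suc: "xs (Suc k) = phi_inv N (s k) (xs k)" for k by (simp add: xs_def s_def)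
  have single: "j = s k" if "cut_point F (xs k)" "P (xs k)" "j \<in> D" "xs k \<in> phi N j ` F" for j k
    using False cell that unfolding s_def cut_point_def by blast
  have xs_cut: "cut_point F (xs k) \<and> P (xs k)" for k
  proof (induction k)
    case 0
    then show ?case using cut \<open>P x\<close> by (simp add: xs_def)
  next
    case (Suc k)
    then have cell_k: "s k \<in> D" "xs k \<in> phi N (s k) ` F"
      using cell unfolding s_def cut_point_def by blast+
    have "cut_point F (phi_inv N (s k) (xs k))"
      by (rule cut_point_phi_inv_single_cell[OF F _ cell_k]) (use Suc single in auto)
    moreover have "P (phi_inv N (s k) (xs k))" using P_phi_inv[OF _ cell_k] Suc by blast
    ultimately show ?case by (simp add: xs_Suc)
  qed
  have cell_k: "s k \<in> D" "xs k \<in> phi N (s k) ` F" "xs k \<in> F" for k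
    using cell xs_cut unfolding s_def cut_point_def by blast+
  have "uniquely_addressed x" unfolding uniquely_addressed_def
  proof (rule exI[of _ s], rule exI[of _ xs], intro conjI allI ballI impI)
    show "xs 0 = x" by (simp add: xs_def)
    fix k
    show "s k \<in> D" "xs k \<in> F" by (fact cell_k)+
    show "xs k = phi N (s k) (xs (Suc k))" using N_pos by (simp add: xs_Suc)
    show "j = s k" if "j \<in> D" "xs k \<in> phi N j ` F" for j
      using single xs_cut that by blast
  qed
  then show ?thesis by (rule unique)
qed

lemma cut_point_two_cells_phi_inv:
  assumes F: "connected F" and nf: "\<not> fragile N D F" and cut: "cut_point F y"
    and ij: "i \<in> D" "j \<in> D" "i \<noteq> j" "y \<in> phi N i ` F" "y \<in> phi N j ` F"
  obtains a b where "a \<in> D" "b \<in> D" "a \<noteq> b" "y \<in> phi N a ` F" "y \<in> phi N b ` F"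
    "cut_point F (phi_inv N a y)"
proof -
  obtain a where a: "a \<in> D" "y \<in> phi N a ` F" "cut_point F (phi_inv N a y)"
    using cut_point_phi_inv[OF F nf cut] .
  obtain b where "b \<in> D" "b \<noteq> a" "y \<in> phi N b ` F"
    using ij by (cases "i = a") auto
  then show ?thesis using that a by metis
qed

lemma boundary_cut_point_uniquely_addressed:
  assumes F: "connected F" and nf: "\<not> fragile N D F"
    and z: "cut_point F z" "on_square_boundary z"
  obtains v where "cut_point F v" "uniquely_addressed v"
proof (rule cut_point_descent[where P = on_square_boundary, OF F z])
  fix w a b
  assume w: "cut_point F w" "on_square_boundary w" "a \<in> D" "b \<in> D" "a \<noteq> b"
    "w \<in> phi N a ` F" "w \<in> phi N b ` F"
  obtain a' b' where ab': "a' \<in> D" "b' \<in> D" "a' \<noteq> b'" "w \<in> phi N a' ` F" "w \<in> phi N b' ` F"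
    and v: "cut_point F (phi_inv N a' w)"
    by (rule cut_point_two_cells_phi_inv[OF F nf w(1,3-7)])
  have "square_corner (phi_inv N a' w)"
    using phi_inv_boundary_two_cells_corner[OF w(2) ab'] .
  then show thesis using that v corner_uniquely_addressed by (simp add: cut_point_def)
qed (use phi_inv_boundary that z(1) in auto)

lemma cut_point_uniquely_addressed:
  assumes F: "connected F" and nf: "\<not> fragile N D F" and x: "cut_point F x"
  obtains v where "cut_point F v" "uniquely_addressed v"
proof (rule cut_point_descent[OF F x, of "\<lambda>_. True"])
  fix y i j
  assume "cut_point F y" "True" "i \<in> D" "j \<in> D" "i \<noteq> j" "y \<in> phi N i ` F" "y \<in> phi N j ` F"
  then obtain a b where ab: "a \<in> D" "b \<in> D" "a \<noteq> b" "y \<in> phi N a ` F" "y \<in> phi N b ` F"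
    and z: "cut_point F (phi_inv N a y)"
    by (metis cut_point_two_cells_phi_inv[OF F nf])
  show thesis
    using boundary_cut_point_uniquely_addressed[OF F nf z phi_inv_two_cells_boundary[OF ab]] that .
qed (use that x in auto)

end

theorem mainTheorem18:
  fixes N :: nat and D :: "digit set" and F :: "pt set"
  assumes "GSC_data N D"
    and "is_attractor N D F"
    and "connected F"
    and "\<not> fragile N D F"
    and "\<exists>x. cut_point F x"
  shows "\<exists>x. cut_point F x \<and> (\<exists>!s. s \<in> Dinf D \<and> coding N F s = x)"
proof -
  interpret gsc_attractor N D F using assms(1,2) by unfold_locales
  obtain x where "cut_point F x" using assms(5) by blast
  then obtain v where "cut_point F v" "uniquely_addressed v"
    using cut_point_uniquely_addressed[OF assms(3,4)] by blast
  then show ?thesis using uniquely_addressed_unique_coding by blast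
qed

end
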